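(* Let $G=(V\cup W,E)$ be a complete bipartite graph with parts $V,W$, $|V|=|W|=n$. Let $C>4$ be a constant, $K=C\log n$, $I=n/K$ (assume $K$ divides $n$), and partition $V=V(0)\cup\dots\cup V(K-1)$ and $W=W(0)\cup\dots\cup W(K-1)$ into sets of size $I$ each. Let $d\in W$ and let the protocol $\mathcal{P}_B$ be defined by the following distributions for routing towards $d$: for $v\in V(i)$, $\mathcal{D}(v,\mathcal{F}_v,d)=\mathrm{Uniform}(\{d\})$ if $d\notin\mathcal{F}_v$ and $\mathcal{D}(v,\mathcal{F}_v,d)=\mathrm{Uniform}(W(i)\setminus\mathcal{F}_v)$ otherwise; for $w\in W(i)$ with $w\neq d$, $\mathcal{D}(w,\mathcal{F}_w,d)=\mathrm{Uniform}(V((i+1)\bmod K)\setminus\mathcal{F}_w)$. Suppose all-to-one routing towards $d$ is performed and the set of failed edges $\mathcal{F}$ satisfies, for every $0\le i<K$: (1) for all $w\in W$, $|\{v\in V(i)~|~w\in\mathcal{F}_v\}|\le I/3$, and (2) for all $v\in V$, $|\{w\in W(i)~|~v\in\mathcal{F}_w\}|\le I/3$. Then, with probability at least $1-3n^{-(C-1)}$, every node $u\in V\cup W$ with $u\neq d$ has $\mathcal{L}(u)=O(\log n\cdot\log\log n)$; this holds even if $\mathcal{F}$ is constructed with knowledge of $\mathcal{P}_B$ and $d$.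
   Context: Local destination-based failover routing on a graph with node set $U$: given failed edges $\mathcal{F}$, $\mathcal{F}_v=\{w~|~(v,w)\in\mathcal{F}\}$. A protocol specifies, for each node $v$, destination $d$ and $\mathcal{F}_v$, a distribution $\mathcal{D}(v,\mathcal{F}_v,d)$ over the non-failed neighbors of $v$ (and $v$ itself). The failure set is fixed first (by an adversary knowing the protocol and $d$ but not the random choices); then each node $v$ independently draws its routing entry $\alpha(v)$ from $\mathcal{D}(v,\mathcal{F}_v,d)$ and forwards every packet with destination $d$ to $\alpha(v)$. All-to-one routing towards $d$: every node other than $d$ sends one flow towards $d$ along the forwarding entries. The load $\mathcal{L}(u)$ is the number of flows passing through $u$ (including its own); nodes on a forwarding cycle traversed by a flow have load $\infty$. $\mathrm{Uniform}(A)$ is the uniform distribution on the set $A$. *)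

theory Defs
  imports "HOL-Probability.Probability" "HOL-Library.Extended_Nat"
begin

definition failed_nbrs :: "('n \<times> 'n) set \<Rightarrow> 'n \<Rightarrow> 'n set" where
  "failed_nbrs F v = {w. (v, w) \<in> F}"

text \<open>The protocol P_B: distribution of the routing entry of node u towards d.
  V, W are the two parts, lvl u is the index i of the block V(i) resp. W(i)
  containing u, K the number of blocks.\<close>
definition PB_dist :: "'n set \<Rightarrow> 'n set \<Rightarrow> ('n \<Rightarrow> nat) \<Rightarrow> nat \<Rightarrow> ('n \<times> 'n) set \<Rightarrow> 'n \<Rightarrow> 'n \<Rightarrow> 'n pmf" where
  "PB_dist V W lvl K F d u =
     (if u \<in> V then
        (if d \<notin> failed_nbrs F u then pmf_of_set {d}
         else pmf_of_set ({w \<in> W. lvl w = lvl u} - failed_nbrs F u))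
      else pmf_of_set ({v \<in> V. lvl v = (lvl u + 1) mod K} - failed_nbrs F u))"

text \<open>Joint distribution of the routing entries: every node other than d draws
  independently; d keeps the packet (entry d).\<close>
definition PB_routing :: "'n set \<Rightarrow> 'n set \<Rightarrow> ('n \<Rightarrow> nat) \<Rightarrow> nat \<Rightarrow> ('n \<times> 'n) set \<Rightarrow> 'n \<Rightarrow> ('n \<Rightarrow> 'n) pmf" where
  "PB_routing V W lvl K F d = Pi_pmf ((V \<union> W) - {d}) d (PB_dist V W lvl K F d)"

definition flow_visits :: "('n \<Rightarrow> 'n) \<Rightarrow> 'n \<Rightarrow> 'n \<Rightarrow> 'n \<Rightarrow> bool" where
  "flow_visits \<alpha> d s x \<longleftrightarrow> (\<exists>k. (\<alpha> ^^ k) s = x \<and> (\<forall>j<k. (\<alpha> ^^ j) s \<noteq> d))"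

text \<open>Load of node x in all-to-one routing towards d over node set U:
  infinite if x (\<noteq> d) lies on a forwarding cycle (such x is traversed at least
  by its own flow), otherwise the number of flows passing through x.\<close>
definition load :: "'n set \<Rightarrow> 'n \<Rightarrow> ('n \<Rightarrow> 'n) \<Rightarrow> 'n \<Rightarrow> enat" where
  "load U d \<alpha> x =
     (if x \<noteq> d \<and> (\<exists>k>0. (\<alpha> ^^ k) x = x) then \<infinity>
      else enat (card {s \<in> U - {d}. flow_visits \<alpha> d s x}))"

end

theory Submission
  imports Defs
begin

text \<open>Give the nodes of V(i) phase 2i and those of W(i) phase 2i + 1, modulo 2K: a packet that is
  not delivered to d advances by one phase per hop. It can leave V without reaching d only from a
  cut-off node, one whose edge to d failed, and a node of W forwards to a cut-off node with
  probability at most 1/2, since at most I/3 of its at least 2I/3 choices are cut off. Hence,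
  except with probability n 2^-(K-1), every walk hits d within 2K - 1 hops; then there are no
  forwarding cycles, and the load of u is at most one plus the total size of its first 2K - 2
  layers of predecessors. A V-node has at most 3/2 predecessors in expectation and a W-node at
  most 1/2, so the layers form a subcritical branching process. An exponential moment bound,
  taken layer by layer using the independence of the entries of distinct phases, shows that their
  total size exceeds 1000 (C + 1) ln n with probability at most n^-C/2 for each node.\<close>

lemma prod_one_plus_le_exp_sum:
  fixes a :: "'a \<Rightarrow> real"
  assumes "\<And>x. x \<in> A \<Longrightarrow> 0 \<le> a x"
  shows "(\<Prod>x\<in>A. 1 + a x) \<le> exp (\<Sum>x\<in>A. a x)"
proof -
  have "(\<Prod>x\<in>A. 1 + a x) \<le> (\<Prod>x\<in>A. exp (a x))"
    using assms by (intro prod_mono) auto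
  also have "\<dots> = exp (\<Sum>x\<in>A. a x)"
    by (cases "finite A") (simp_all add: exp_sum)
  finally show ?thesis .
qed

lemma measure_Pi_pmf_Pi_override_on:
  assumes "finite A" "X \<subseteq> A" "\<And>x. x \<in> X \<Longrightarrow> B x = UNIV"
  shows "measure_pmf.prob (Pi_pmf A dflt p) (Pi A (override_on B Y X)) =
         measure_pmf.prob (Pi_pmf A dflt p) (Pi A B) * (\<Prod>x\<in>X. measure_pmf.prob (p x) (Y x))"
proof -
  have split: "(\<Prod>x\<in>A. f x) = (\<Prod>x\<in>A - X. f x) * (\<Prod>x\<in>X. f x)" for f :: "_ \<Rightarrow> real"
    using prod.subset_diff[OF assms(2,1)] by simp
  have "(\<Prod>x\<in>X. measure_pmf.prob (p x) (B x)) = 1"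
    using assms(3) by simp
  then show ?thesis
    using assms(1)
    by (simp add: measure_Pi_pmf_Pi split[of "\<lambda>x. measure_pmf.prob (p x) (override_on B Y X x)"]
        split[of "\<lambda>x. measure_pmf.prob (p x) (B x)"])
qed

lemma sum_pmf_two_steps_le:
  assumes "finite X" "finite Y"
  shows "(\<Sum>(x, y)\<in>X \<times> Y. pmf p x * pmf (q x) y) \<le> measure_pmf.prob p X"
proof -
  have "(\<Sum>(x, y)\<in>X \<times> Y. pmf p x * pmf (q x) y) = (\<Sum>x\<in>X. pmf p x * measure_pmf.prob (q x) Y)"
    using assms by (simp add: sum.cartesian_product[symmetric] sum_distrib_left measure_measure_pmf_finite)
  also have "\<dots> \<le> (\<Sum>x\<in>X. pmf p x)"
    by (intro sum_mono mult_right_le_one_le) auto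
  also have "\<dots> = measure_pmf.prob p X"
    using assms by (simp add: measure_measure_pmf_finite)
  finally show ?thesis .
qed

lemma mod_add_neq_self:
  fixes c k M :: int
  assumes "0 < k" "k < M"
  shows "(c + k) mod M \<noteq> c mod M"
proof
  assume "(c + k) mod M = c mod M"
  then have "M dvd k"
    by (simp add: mod_eq_dvd_iff)
  then show False
    using assms zdvd_imp_le by fastforce
qed

locale protocol_PB =
  fixes V W :: "nat set" and lvl :: "nat \<Rightarrow> nat" and K I d :: nat and F :: "(nat \<times> nat) set"
  assumes finite_V: "finite V" and finite_W: "finite W" and disjoint: "V \<inter> W = {}"
    and K_pos: "0 < K" and I_pos: "0 < I"
    and lvl_less: "\<forall>u \<in> V \<union> W. lvl u < K"
    and card_blocks: "\<forall>i<K. card {v \<in> V. lvl v = i} = I \<and> card {w \<in> W. lvl w = i} = I"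
    and d_in_W: "d \<in> W"
    and sym_F: "sym F"
    and few_failures: "\<forall>i<K. (\<forall>w \<in> W. real (card {v \<in> V. lvl v = i \<and> w \<in> failed_nbrs F v}) \<le> real I / 3)
              \<and> (\<forall>v \<in> V. real (card {w \<in> W. lvl w = i \<and> v \<in> failed_nbrs F w}) \<le> real I / 3)"
begin

definition senders :: "nat set" where
  "senders = V \<union> W - {d}"

definition entry :: "nat \<Rightarrow> nat pmf" where
  "entry u = PB_dist V W lvl K F d u"

abbreviation routing :: "(nat \<Rightarrow> nat) pmf" where
  "routing \<equiv> PB_routing V W lvl K F d"

definition cut_off :: "nat set" where
  "cut_off = {v \<in> V. d \<in> failed_nbrs F v}"

definition target_block :: "nat \<Rightarrow> nat set" where
  "target_block u = (if u \<in> V then {w \<in> W. lvl w = lvl u} else {v \<in> V. lvl v = (lvl u + 1) mod K})"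

definition choices :: "nat \<Rightarrow> nat set" where
  "choices u = target_block u - failed_nbrs F u"

definition phase :: "nat \<Rightarrow> int" where
  "phase x = (if x \<in> V then 2 * int (lvl x) else 2 * int (lvl x) + 1)"

abbreviation period :: int where
  "period \<equiv> 2 * int K"

lemma finite_senders: "finite senders"
  using finite_V finite_W by (simp add: senders_def)

lemma d_notin_V: "d \<notin> V"
  using d_in_W disjoint by auto

lemma cut_off_subset_V: "cut_off \<subseteq> V"
  by (auto simp: cut_off_def)

lemma routing_eq_Pi_pmf: "routing = Pi_pmf senders d entry"
  by (simp add: PB_routing_def senders_def entry_def[abs_def])

lemma phase_range: "x \<in> V \<union> W \<Longrightarrow> 0 \<le> phase x \<and> phase x < period"
  using lvl_less by (fastforce simp: phase_def)

lemma even_phase_iff: "even (phase x) \<longleftrightarrow> x \<in> V"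
  by (simp add: phase_def)

lemma phase_eq_iff: "phase x = phase y \<longleftrightarrow> (x \<in> V \<longleftrightarrow> y \<in> V) \<and> lvl x = lvl y"
  unfolding phase_def by (cases "x \<in> V"; cases "y \<in> V"; simp; presburger)

lemma even_prev_phase_iff: "even ((c - 1) mod period) \<longleftrightarrow> odd c"
proof -
  have "even ((c - 1) mod period) \<longleftrightarrow> even (c - 1)"
    by (simp add: even_iff_mod_2_eq_zero mod_mod_cancel)
  then show ?thesis by simp
qed

lemma finite_target_block: "finite (target_block u)"
  using finite_V finite_W by (simp add: target_block_def)

lemma card_target_block: "u \<in> V \<union> W \<Longrightarrow> card (target_block u) = I"
  using card_blocks lvl_less K_pos by (simp add: target_block_def)

lemma card_target_block_failed: "u \<in> V \<union> W \<Longrightarrow> real (card (target_block u \<inter> failed_nbrs F u)) \<le> real I / 3"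
proof -
  assume u: "u \<in> V \<union> W"
  have sym: "x \<in> failed_nbrs F y \<longleftrightarrow> y \<in> failed_nbrs F x" for x y
    using sym_F by (auto simp: failed_nbrs_def sym_def)
  show ?thesis
  proof (cases "u \<in> V")
    case True
    then have "target_block u \<inter> failed_nbrs F u = {w \<in> W. lvl w = lvl u \<and> u \<in> failed_nbrs F w}"
      using sym by (auto simp: target_block_def)
    then show ?thesis
      using True few_failures lvl_less by simp
  next
    case False
    then have "target_block u \<inter> failed_nbrs F u = {v \<in> V. lvl v = (lvl u + 1) mod K \<and> u \<in> failed_nbrs F v}"
      using sym by (auto simp: target_block_def)
    then show ?thesis
      using False u few_failures K_pos by simp
  qed
qed

lemma finite_choices: "finite (choices u)"
  using finite_target_block by (simp add: choices_def)

lemma card_choices_ge: "u \<in> V \<union> W \<Longrightarrow> 2 * real I / 3 \<le> real (card (choices u))"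
  using card_target_block[of u] card_target_block_failed[of u] finite_target_block[of u]
  by (simp add: choices_def card_Diff_subset_Int of_nat_diff card_mono)

lemma choices_nonempty: "u \<in> V \<union> W \<Longrightarrow> choices u \<noteq> {}"
  using card_choices_ge[of u] I_pos by fastforce

lemma entry_not_cut_off: "x \<in> V \<Longrightarrow> x \<notin> cut_off \<Longrightarrow> entry x = return_pmf d"
  by (simp add: entry_def PB_dist_def cut_off_def pmf_of_set_singleton)

lemma entry_uniform: "x \<in> cut_off \<or> x \<in> W \<Longrightarrow> entry x = pmf_of_set (choices x)"
  using disjoint by (auto simp: entry_def PB_dist_def cut_off_def choices_def target_block_def)

lemma set_entry_uniform: "x \<in> cut_off \<or> x \<in> W \<Longrightarrow> set_pmf (entry x) = choices x"
  using entry_uniform[of x] choices_nonempty[of x] finite_choices[of x] cut_off_subset_V by auto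

lemma set_entry_cut_off:
  assumes "x \<in> cut_off" "y \<in> set_pmf (entry x)"
  shows "y \<in> W - {d} \<and> lvl y = lvl x"
proof -
  have "y \<in> choices x"
    using assms set_entry_uniform by blast
  then show ?thesis
    using assms(1) cut_off_subset_V by (auto simp: choices_def target_block_def cut_off_def)
qed

lemma set_entry_W:
  assumes "x \<in> W" "y \<in> set_pmf (entry x)"
  shows "y \<in> V \<and> lvl y = (lvl x + 1) mod K"
proof -
  have "y \<in> choices x" "x \<notin> V"
    using assms set_entry_uniform disjoint by auto
  then show ?thesis
    by (auto simp: choices_def target_block_def)
qed

lemma set_entry_subset:
  assumes "x \<in> V \<union> W"
  shows "set_pmf (entry x) \<subseteq> V \<union> W"
proof
  fix y assume y: "y \<in> set_pmf (entry x)"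
  consider "x \<in> W" | "x \<in> cut_off" | "x \<in> V" "x \<notin> cut_off"
    using assms by blast
  then show "y \<in> V \<union> W"
  proof cases
    case 1
    then show ?thesis using y set_entry_W by blast
  next
    case 2
    then show ?thesis using y set_entry_cut_off by blast
  next
    case 3
    then show ?thesis using y entry_not_cut_off d_in_W by simp
  qed
qed

lemma phase_entry:
  assumes "x \<in> V \<union> W" "y \<in> set_pmf (entry x)" "y \<noteq> d"
  shows "phase y = (phase x + 1) mod period"
proof (cases "x \<in> V")
  case True
  have "x \<in> cut_off"
  proof (rule ccontr)
    assume "x \<notin> cut_off"
    then show False
      using entry_not_cut_off[OF True] assms(2,3) by simp
  qed
  then have "y \<in> W" "lvl y = lvl x"
    using set_entry_cut_off assms(2) by auto
  moreover have "y \<notin> V"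
    using \<open>y \<in> W\<close> disjoint by auto
  moreover have "lvl x < K"
    using True lvl_less by blast
  ultimately show ?thesis
    using True by (simp add: phase_def)
next
  case False
  then have x: "x \<in> W" "lvl x < K"
    using assms(1) lvl_less by auto
  then have "y \<in> V" "lvl y = (lvl x + 1) mod K"
    using set_entry_W assms(2) by auto
  moreover have "(2 * (int (lvl x) + 1)) mod period = 2 * ((int (lvl x) + 1) mod int K)"
    by (rule mod_mult_mult1)
  ultimately show ?thesis
    using False by (simp add: phase_def of_nat_mod distrib_left add.assoc add.commute)
qed

lemma set_routing_senders: "\<alpha> \<in> set_pmf routing \<Longrightarrow> x \<in> senders \<Longrightarrow> \<alpha> x \<in> set_pmf (entry x)"
  and set_routing_outside: "\<alpha> \<in> set_pmf routing \<Longrightarrow> x \<notin> senders \<Longrightarrow> \<alpha> x = d"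
  using set_Pi_pmf_subset'[OF finite_senders, of d entry]
  unfolding routing_eq_Pi_pmf PiE_dflt_def by auto

lemma routing_step:
  assumes "\<alpha> \<in> set_pmf routing" "x \<in> senders" "\<alpha> x \<noteq> d"
  shows "\<alpha> x \<in> senders" "phase (\<alpha> x) = (phase x + 1) mod period"
proof -
  have x: "x \<in> V \<union> W" "\<alpha> x \<in> set_pmf (entry x)"
    using assms set_routing_senders by (auto simp: senders_def)
  then show "\<alpha> x \<in> senders"
    using set_entry_subset assms(3) by (auto simp: senders_def)
  show "phase (\<alpha> x) = (phase x + 1) mod period"
    using phase_entry x assms(3) by blast
qed

lemma routing_step_cut_off:
  assumes "\<alpha> \<in> set_pmf routing" "x \<in> cut_off"
  shows "\<alpha> x \<in> W - {d}"
proof -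
  have "x \<in> senders"
    using assms(2) cut_off_subset_V d_notin_V by (auto simp: senders_def)
  then show ?thesis
    using assms set_entry_cut_off set_routing_senders by blast
qed

lemma routing_step_V:
  assumes "\<alpha> \<in> set_pmf routing" "x \<in> V" "\<alpha> x \<noteq> d"
  shows "x \<in> cut_off"
proof (rule ccontr)
  assume "x \<notin> cut_off"
  moreover have "x \<in> senders"
    using assms(2) d_notin_V by (auto simp: senders_def)
  ultimately show False
    using assms set_routing_senders entry_not_cut_off by fastforce
qed

lemma routing_step_W:
  assumes "\<alpha> \<in> set_pmf routing" "x \<in> W - {d}"
  shows "\<alpha> x \<in> V"
proof -
  have "\<alpha> x \<in> set_pmf (entry x)"
    using assms set_routing_senders by (simp add: senders_def)
  then show ?thesis
    using assms(2) set_entry_W by blast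
qed

lemma prob_routing_override_on:
  assumes "X \<subseteq> senders" "\<And>x. x \<in> X \<Longrightarrow> B x = UNIV"
  shows "measure_pmf.prob routing (Pi senders (override_on B Y X)) =
         measure_pmf.prob routing (Pi senders B) * (\<Prod>x\<in>X. measure_pmf.prob (entry x) (Y x))"
  unfolding routing_eq_Pi_pmf by (rule measure_Pi_pmf_Pi_override_on[OF finite_senders assms])

lemma prob_entry_le:
  assumes "x \<in> cut_off \<or> x \<in> W"
  shows "measure_pmf.prob (entry x) S \<le> 3 * real (card (choices x \<inter> S)) / (2 * real I)"
proof -
  have x: "x \<in> V \<union> W"
    using assms cut_off_subset_V by auto
  have "measure_pmf.prob (entry x) S = real (card (choices x \<inter> S)) / real (card (choices x))"
    using entry_uniform[OF assms] choices_nonempty[OF x] finite_choices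
    by (simp add: measure_pmf_of_set)
  also have "\<dots> \<le> real (card (choices x \<inter> S)) / (2 * real I / 3)"
    using card_choices_ge[OF x] I_pos by (intro divide_left_mono) auto
  finally show ?thesis
    by simp
qed

lemma card_cut_off_block: "i < K \<Longrightarrow> real (card {v \<in> cut_off. lvl v = i}) \<le> real I / 3"
proof -
  assume "i < K"
  moreover have "{v \<in> cut_off. lvl v = i} = {v \<in> V. lvl v = i \<and> d \<in> failed_nbrs F v}"
    by (auto simp: cut_off_def)
  ultimately show ?thesis
    using few_failures d_in_W by simp
qed

lemma prob_entry_cut_off_le: "x \<in> W \<Longrightarrow> measure_pmf.prob (entry x) cut_off \<le> 1 / 2"
proof -
  assume x: "x \<in> W"
  then have "choices x \<inter> cut_off \<subseteq> {v \<in> cut_off. lvl v = (lvl x + 1) mod K}"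
    using disjoint by (auto simp: choices_def target_block_def)
  then have "card (choices x \<inter> cut_off) \<le> card {v \<in> cut_off. lvl v = (lvl x + 1) mod K}"
    using finite_V cut_off_subset_V by (intro card_mono) (auto intro: finite_subset)
  then have "real (card (choices x \<inter> cut_off)) \<le> real I / 3"
    using card_cut_off_block[of "(lvl x + 1) mod K"] K_pos by simp
  have "measure_pmf.prob (entry x) cut_off \<le> 3 * real (card (choices x \<inter> cut_off)) / (2 * real I)"
    using prob_entry_le x by blast
  also have "\<dots> \<le> 3 * (real I / 3) / (2 * real I)"
    using \<open>real (card (choices x \<inter> cut_off)) \<le> real I / 3\<close> by (intro divide_right_mono) auto
  also have "\<dots> = 1 / 2"
    using I_pos by simp
  finally show ?thesis .
qed

lemma card_active_phase_le:
  "real (card {x \<in> senders. phase x = c \<and> (x \<in> cut_off \<or> x \<in> W)})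
     \<le> (if odd c then real I else real I / 3)" (is "real (card ?X) \<le> _")
proof (cases "?X = {}")
  case True
  show ?thesis
    unfolding True by simp
next
  case False
  then obtain a where a: "a \<in> senders" "phase a = c" "a \<in> cut_off \<or> a \<in> W"
    by blast
  have "lvl a < K"
    using a(1) lvl_less by (auto simp: senders_def)
  show ?thesis
  proof (cases "a \<in> W")
    case True
    then have "?X \<subseteq> {w \<in> W. lvl w = lvl a}"
      using a disjoint cut_off_subset_V phase_eq_iff[of _ a] by auto
    then have "card ?X \<le> card {w \<in> W. lvl w = lvl a}"
      using finite_W by (intro card_mono) auto
    moreover have "odd c"
      using True a(2) disjoint even_phase_iff[of a] by auto
    ultimately show ?thesis
      using card_blocks \<open>lvl a < K\<close> by simp
  next
    case False
    then have "?X \<subseteq> {v \<in> cut_off. lvl v = lvl a}"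
      using a disjoint cut_off_subset_V phase_eq_iff[of _ a] by auto
    then have "card ?X \<le> card {v \<in> cut_off. lvl v = lvl a}"
      using finite_V cut_off_subset_V by (intro card_mono) (auto intro: finite_subset)
    moreover have "even c"
      using False a cut_off_subset_V even_phase_iff[of a] by auto
    ultimately show ?thesis
      using card_cut_off_block[OF \<open>lvl a < K\<close>] by simp
  qed
qed

text \<open>Mean number of predecessors of a node of phase c: a V-node can be chosen by each of
  the I nodes of the preceding W-block with probability at most 3/(2I), a W-node only by
  the at most I/3 cut-off nodes of the preceding V-block.\<close>

definition mean_preds :: "int \<Rightarrow> real" where
  "mean_preds c = (if even c then 3 / 2 else 1 / 2)"

lemma sum_prob_entry_le:
  assumes S: "S \<subseteq> senders" "\<forall>y\<in>S. phase y = c"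
  shows "(\<Sum>x\<in>{x \<in> senders. phase x = (c - 1) mod period}. measure_pmf.prob (entry x) S)
           \<le> mean_preds c * real (card S)"
proof -
  define A where "A = {x \<in> senders. phase x = (c - 1) mod period \<and> (x \<in> cut_off \<or> x \<in> W)}"
  have "finite S" "d \<notin> S"
    using S finite_senders by (auto simp: senders_def intro: finite_subset)
  have "(\<Sum>x\<in>{x \<in> senders. phase x = (c - 1) mod period}. measure_pmf.prob (entry x) S)
      = (\<Sum>x\<in>A. measure_pmf.prob (entry x) S)"
  proof (intro sum.mono_neutral_right)
    show "\<forall>x\<in>{x \<in> senders. phase x = (c - 1) mod period} - A. measure_pmf.prob (entry x) S = 0"
      using entry_not_cut_off \<open>d \<notin> S\<close> by (fastforce simp: A_def senders_def measure_return)
  qed (auto simp: A_def finite_senders)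
  also have "\<dots> \<le> (\<Sum>x\<in>A. 3 * real (card S) / (2 * real I))"
  proof (intro sum_mono order.trans[OF prob_entry_le])
    show "x \<in> A \<Longrightarrow> x \<in> cut_off \<or> x \<in> W" for x
      by (simp add: A_def)
    show "3 * real (card (choices x \<inter> S)) / (2 * real I) \<le> 3 * real (card S) / (2 * real I)" for x
      using \<open>finite S\<close> by (intro divide_right_mono) (auto intro: card_mono)
  qed
  also have "\<dots> = real (card A) * (3 / (2 * real I)) * real (card S)"
    by simp
  also have "\<dots> \<le> mean_preds c * real (card S)"
  proof (intro mult_right_mono)
    have "real (card A) \<le> (if even c then real I else real I / 3)"
      using card_active_phase_le[of "(c - 1) mod period"] even_prev_phase_iff[of c]
      by (simp add: A_def)
    then show "real (card A) * (3 / (2 * real I)) \<le> mean_preds c"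
      using I_pos by (auto simp: mean_preds_def field_simps)
  qed simp
  finally show ?thesis .
qed

subsection \<open>Long detours\<close>

lemma sum_pmf_to_cut_off_le:
  assumes "x \<in> W" "Vs \<subseteq> cut_off" "finite Ws"
  shows "(\<Sum>(v, w)\<in>Vs \<times> Ws. pmf (entry x) v * pmf (entry v) w) \<le> 1 / 2"
proof -
  have "finite Vs"
    by (rule finite_subset[OF order.trans[OF assms(2) cut_off_subset_V] finite_V])
  then have "(\<Sum>(v, w)\<in>Vs \<times> Ws. pmf (entry x) v * pmf (entry v) w) \<le> measure_pmf.prob (entry x) Vs"
    using assms(3) by (rule sum_pmf_two_steps_le)
  also have "\<dots> \<le> measure_pmf.prob (entry x) cut_off"
    using assms(2) by (intro measure_pmf.finite_measure_mono) auto
  also have "\<dots> \<le> 1 / 2"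
    using assms(1) by (rule prob_entry_cut_off_le)
  finally show ?thesis .
qed

definition free_phases :: "(nat \<Rightarrow> nat set) \<Rightarrow> int \<Rightarrow> nat \<Rightarrow> bool" where
  "free_phases B c r \<longleftrightarrow> (\<forall>y\<in>senders. \<forall>i<r. phase y = (c + int i) mod period \<longrightarrow> B y = UNIV)"

lemma free_phasesD:
  "free_phases B c r \<Longrightarrow> y \<in> senders \<Longrightarrow> i < r \<Longrightarrow> phase y = (c + int i) mod period \<Longrightarrow> B y = UNIV"
  by (simp add: free_phases_def)

lemma free_phases_UNIV [simp]: "free_phases (\<lambda>_. UNIV) c r"
  by (simp add: free_phases_def)

lemma free_phases_shift:
  assumes "free_phases B c r'" "k + r \<le> r'" "c' mod period = (c + int k) mod period"
  shows "free_phases B c' r"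
  unfolding free_phases_def
proof (intro ballI allI impI)
  fix y i assume "y \<in> senders" "i < r" "phase y = (c' + int i) mod period"
  moreover have "(c' + int i) mod period = (c' mod period + int i) mod period"
    by (simp add: mod_add_left_eq)
  then have "(c' + int i) mod period = (c + int (k + i)) mod period"
    using assms(3) by (simp add: mod_add_left_eq add.assoc)
  ultimately show "B y = UNIV"
    using free_phasesD[OF assms(1), of y "k + i"] assms(2) by simp
qed

lemma free_phases_fun_upd:
  "free_phases B c r \<Longrightarrow> (\<And>i. i < r \<Longrightarrow> phase x \<noteq> (c + int i) mod period) \<Longrightarrow> free_phases (B(x := X)) c r"
  by (auto simp: free_phases_def)

lemma free_phases_override_on:
  "free_phases B c r \<Longrightarrow> (\<And>x i. x \<in> A \<Longrightarrow> i < r \<Longrightarrow> phase x \<noteq> (c + int i) mod period)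
     \<Longrightarrow> free_phases (override_on B Y A) c r"
  by (auto simp: free_phases_def override_on_def)

lemma free_phases_two_steps:
  assumes "2 * int (Suc j) \<le> period" "x \<in> senders" "v \<in> senders"
    and "phase v = (phase x + 1) mod period" "phase w = (phase x + 2) mod period"
    and "free_phases B (phase x) (2 * Suc j)"
  shows "B x = UNIV" "B v = UNIV" "free_phases (B(x := {v}, v := {w})) (phase w) (2 * j)"
proof -
  have x: "0 \<le> phase x" "phase x < period"
    using assms(2) phase_range by (auto simp: senders_def)
  show "B x = UNIV"
    using free_phasesD[OF assms(6,2), of 0] x by simp
  show "B v = UNIV"
    using free_phasesD[OF assms(6,3), of 1] assms(4) by simp
  have "free_phases B (phase w) (2 * j)"
    using assms(6) by (rule free_phases_shift[of _ _ _ 2]) (simp_all add: assms(5))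
  have x_free: "phase x \<noteq> (phase w + int i) mod period"
    and v_free: "phase v \<noteq> (phase w + int i) mod period" if "i < 2 * j" for i
  proof -
    have "(phase w + int i) mod period = (phase x + int (i + 2)) mod period"
      using assms(5) by (simp add: mod_add_right_eq algebra_simps)
    moreover have "(phase x + int (i + 2)) mod period \<noteq> phase x mod period"
      using that assms(1) by (intro mod_add_neq_self) auto
    moreover have "(phase x + 1 + int (i + 1)) mod period \<noteq> (phase x + 1) mod period"
      using that assms(1) by (intro mod_add_neq_self) auto
    ultimately show "phase x \<noteq> (phase w + int i) mod period" "phase v \<noteq> (phase w + int i) mod period"
      using x assms(4) by (simp_all add: algebra_simps)
  qed
  have "free_phases (B(x := {v})) (phase w) (2 * j)"
    using \<open>free_phases B (phase w) (2 * j)\<close> x_free by (rule free_phases_fun_upd)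
  then show "free_phases (B(x := {v}, v := {w})) (phase w) (2 * j)"
    using v_free by (rule free_phases_fun_upd)
qed

fun detour :: "(nat \<Rightarrow> nat) \<Rightarrow> nat \<Rightarrow> nat \<Rightarrow> bool" where
  "detour \<alpha> 0 x \<longleftrightarrow> True"
| "detour \<alpha> (Suc j) x \<longleftrightarrow> \<alpha> x \<in> cut_off \<and> detour \<alpha> j (\<alpha> (\<alpha> x))"

lemma prob_routing_fun_upd2:
  assumes "x \<in> senders" "v \<in> senders" "x \<noteq> v" "B x = UNIV" "B v = UNIV"
  shows "measure_pmf.prob routing (Pi senders (B(x := {v}, v := {w}))) =
         measure_pmf.prob routing (Pi senders B) * (pmf (entry x) v * pmf (entry v) w)"
proof -
  have "B(x := {v}, v := {w}) = override_on B (\<lambda>y. if y = x then {v} else {w}) {x, v}"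
    using assms(3) by (simp add: override_on_def fun_eq_iff)
  moreover have "measure_pmf.prob routing
        (Pi senders (override_on B (\<lambda>y. if y = x then {v} else {w}) {x, v})) =
      measure_pmf.prob routing (Pi senders B)
      * (\<Prod>y\<in>{x, v}. measure_pmf.prob (entry y) (if y = x then {v} else {w}))"
    by (rule prob_routing_override_on) (use assms in auto)
  ultimately show ?thesis
    using assms(3) by (simp add: measure_pmf_single)
qed

lemma detour_Suc_subset:
  assumes "x \<in> W - {d}"
  shows "Pi senders B \<inter> {\<alpha>. detour \<alpha> (Suc j) x} \<inter> set_pmf routing \<subseteq>
    (\<Union>(v, w) \<in> {v \<in> cut_off. phase v = (phase x + 1) mod period}
                 \<times> {w \<in> W - {d}. phase w = (phase x + 2) mod period}.
       Pi senders (B(x := {v}, v := {w})) \<inter> {\<alpha>. detour \<alpha> j w})" (is "_ \<subseteq> ?U")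
proof
  fix \<alpha> assume \<alpha>: "\<alpha> \<in> Pi senders B \<inter> {\<alpha>. detour \<alpha> (Suc j) x} \<inter> set_pmf routing"
  define v where "v = \<alpha> x"
  define w where "w = \<alpha> v"
  have x: "x \<in> senders" and v: "v \<in> cut_off" "v \<in> senders"
    using assms \<alpha> cut_off_subset_V d_notin_V by (auto simp: senders_def v_def)
  have w: "w \<in> W - {d}"
    using routing_step_cut_off \<alpha> v by (simp add: w_def)
  have "phase v = (phase x + 1) mod period" "phase w = (phase v + 1) mod period"
    using routing_step(2) \<alpha> x v w d_notin_V cut_off_subset_V by (auto simp: v_def w_def)
  then have "phase w = (phase x + 2) mod period"
    by (simp add: mod_add_left_eq add.assoc)
  then have "(v, w) \<in> {v \<in> cut_off. phase v = (phase x + 1) mod period}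
                 \<times> {w \<in> W - {d}. phase w = (phase x + 2) mod period}"
    using v w \<open>phase v = (phase x + 1) mod period\<close> by simp
  moreover have "x \<noteq> v"
    using assms v(1) cut_off_subset_V disjoint by auto
  then have "\<alpha> \<in> Pi senders (B(x := {v}, v := {w})) \<inter> {\<alpha>. detour \<alpha> j w}"
    using \<alpha> by (auto simp: v_def w_def)
  ultimately show "\<alpha> \<in> ?U"
    by blast
qed

text \<open>The product event Pi senders B makes the induction work: after the first two hops of the
  detour it records the entries of x and of its successor, and the rest of the detour depends
  only on the entries of phases that B leaves free.\<close>

lemma prob_detour_le:
  assumes "2 * int j \<le> period" "x \<in> W - {d}" "free_phases B (phase x) (2 * j)"
  shows "measure_pmf.prob routing (Pi senders B \<inter> {\<alpha>. detour \<alpha> j x})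
           \<le> measure_pmf.prob routing (Pi senders B) / 2 ^ j"
  using assms
proof (induction j arbitrary: x B)
  case 0
  show ?case
    by (simp add: measure_pmf.finite_measure_mono)
next
  case (Suc j)
  define Vs where "Vs = {v \<in> cut_off. phase v = (phase x + 1) mod period}"
  define Ws where "Ws = {w \<in> W - {d}. phase w = (phase x + 2) mod period}"
  let ?P = "measure_pmf.prob routing (Pi senders B)"
  have x: "x \<in> senders"
    using Suc.prems(2) by (simp add: senders_def)
  have "finite Vs" "finite Ws"
    using finite_V finite_W cut_off_subset_V by (auto simp: Vs_def Ws_def intro: finite_subset)
  have step: "measure_pmf.prob routing (Pi senders (B(x := {v}, v := {w})) \<inter> {\<alpha>. detour \<alpha> j w})
      \<le> ?P * (pmf (entry x) v * pmf (entry v) w) / 2 ^ j" if vw: "v \<in> Vs" "w \<in> Ws" for v w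
  proof -
    have v: "v \<in> senders" "x \<noteq> v"
      using vw Suc.prems(2) cut_off_subset_V disjoint d_notin_V by (auto simp: Vs_def senders_def)
    have "phase v = (phase x + 1) mod period" "phase w = (phase x + 2) mod period"
      using vw by (auto simp: Vs_def Ws_def)
    note free = free_phases_two_steps[OF Suc.prems(1) x v(1) this Suc.prems(3)]
    have "measure_pmf.prob routing (Pi senders (B(x := {v}, v := {w})) \<inter> {\<alpha>. detour \<alpha> j w})
        \<le> measure_pmf.prob routing (Pi senders (B(x := {v}, v := {w}))) / 2 ^ j"
      using Suc.IH free(3) Suc.prems(1) vw by (simp add: Ws_def)
    then show ?thesis
      using prob_routing_fun_upd2[OF x v free(1,2)] by simp
  qed
  have "measure_pmf.prob routing (Pi senders B \<inter> {\<alpha>. detour \<alpha> (Suc j) x})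
      \<le> measure_pmf.prob routing (\<Union>(v, w) \<in> Vs \<times> Ws.
            Pi senders (B(x := {v}, v := {w})) \<inter> {\<alpha>. detour \<alpha> j w})"
    using detour_Suc_subset[OF Suc.prems(2), of B j]
    by (subst measure_Int_set_pmf[symmetric]) (auto simp: Vs_def Ws_def intro!: measure_pmf.finite_measure_mono)
  also have "\<dots> \<le> (\<Sum>(v, w) \<in> Vs \<times> Ws. ?P * (pmf (entry x) v * pmf (entry v) w) / 2 ^ j)"
    using \<open>finite Vs\<close> \<open>finite Ws\<close> step
    by (intro order.trans[OF measure_pmf.finite_measure_subadditive_finite] sum_mono) auto
  also have "\<dots> = ?P / 2 ^ j * (\<Sum>(v, w) \<in> Vs \<times> Ws. pmf (entry x) v * pmf (entry v) w)"
    by (simp add: sum_distrib_left case_prod_beta)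
  also have "\<dots> \<le> ?P / 2 ^ j * (1 / 2)"
    using sum_pmf_to_cut_off_le[of x Vs Ws] Suc.prems(2) \<open>finite Ws\<close>
    by (intro mult_left_mono) (auto simp: Vs_def)
  finally show ?case
    by simp
qed

subsection \<open>Layers of predecessors\<close>

definition preds :: "(nat \<Rightarrow> nat) \<Rightarrow> nat set \<Rightarrow> nat set" where
  "preds \<alpha> S = {x \<in> senders. \<alpha> x \<in> S}"

definition layer :: "(nat \<Rightarrow> nat) \<Rightarrow> nat \<Rightarrow> nat set \<Rightarrow> nat set" where
  "layer \<alpha> i S = (preds \<alpha> ^^ i) S"

lemma layer_0 [simp]: "layer \<alpha> 0 S = S"
  by (simp add: layer_def)

lemma layer_Suc: "layer \<alpha> (Suc i) S = layer \<alpha> i (preds \<alpha> S)"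
  by (simp add: layer_def funpow_swap1)

lemma sum_card_layers_Suc:
  "(\<Sum>i<Suc r. real (card (layer \<alpha> (Suc i) S)))
     = real (card (preds \<alpha> S)) + (\<Sum>i<r. real (card (layer \<alpha> (Suc i) (preds \<alpha> S))))"
  by (simp only: sum.lessThan_Suc_shift layer_Suc layer_0)

lemma phase_preds:
  assumes "\<alpha> \<in> set_pmf routing" "S \<subseteq> senders" "\<forall>y\<in>S. phase y = c" "x \<in> preds \<alpha> S"
  shows "phase x = (c - 1) mod period"
proof -
  have x: "x \<in> senders" "\<alpha> x \<in> S"
    using assms(4) by (auto simp: preds_def)
  then have "\<alpha> x \<noteq> d"
    using assms(2) by (auto simp: senders_def)
  then have "c = (phase x + 1) mod period"
    using routing_step(2)[OF assms(1) x(1)] assms(3) x(2) by simp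
  moreover have "0 \<le> phase x" "phase x < period"
    using phase_range x(1) by (auto simp: senders_def)
  ultimately show ?thesis
    by (simp add: mod_diff_left_eq)
qed

text \<open>Rates of the exponential moment bound for the layers, chosen to satisfy beta_recursion; this
  is possible because two consecutive layers shrink by the factor 3/2 * 1/2 < 1 in expectation.\<close>

definition theta :: real where
  "theta = 1 / 1000"

definition beta :: "int \<Rightarrow> real" where
  "beta c = (if even c then 1 / 80 else 7 / 1000)"

lemma beta_recursion: "mean_preds c * (exp (theta + beta ((c - 1) mod period)) - 1) \<le> beta c"
proof (cases "even c")
  case True
  then have eq: "theta + beta ((c - 1) mod period) = 8 / 1000"
    using even_prev_phase_iff by (simp add: theta_def beta_def)
  have "exp (8 / 1000 :: real) \<le> 1 + 8 / 1000 + (8 / 1000) ^ 2"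
    by (rule exp_bound) auto
  then show ?thesis
    unfolding eq using True by (simp add: mean_preds_def beta_def power2_eq_square)
next
  case False
  then have eq: "theta + beta ((c - 1) mod period) = 27 / 2000"
    using even_prev_phase_iff by (simp add: theta_def beta_def)
  have "exp (27 / 2000 :: real) \<le> 1 + 27 / 2000 + (27 / 2000) ^ 2"
    by (rule exp_bound) auto
  then show ?thesis
    unfolding eq using False by (simp add: mean_preds_def beta_def power2_eq_square)
qed

lemma sum_Pow_prod_le_exp_beta:
  assumes "S \<subseteq> senders" "\<forall>y\<in>S. phase y = c"
  defines "A \<equiv> {x \<in> senders. phase x = (c - 1) mod period}"
    and "\<gamma> \<equiv> theta + beta ((c - 1) mod period)"
  shows "(\<Sum>T\<in>Pow A. (\<Prod>x\<in>T. measure_pmf.prob (entry x) S * exp \<gamma>)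
                     * (\<Prod>x\<in>A - T. 1 - measure_pmf.prob (entry x) S))
           \<le> exp (beta c * real (card S))"
proof -
  let ?p = "\<lambda>x. measure_pmf.prob (entry x) S"
  have "0 \<le> exp \<gamma> - 1"
    by (simp add: \<gamma>_def theta_def beta_def)
  have "finite A"
    using finite_senders by (simp add: A_def)
  then have "(\<Sum>T\<in>Pow A. (\<Prod>x\<in>T. ?p x * exp \<gamma>) * (\<Prod>x\<in>A - T. 1 - ?p x))
      = (\<Prod>x\<in>A. 1 + ?p x * (exp \<gamma> - 1))"
    by (simp add: prod_add[symmetric] algebra_simps)
  also have "\<dots> \<le> exp (\<Sum>x\<in>A. ?p x * (exp \<gamma> - 1))"
    using \<open>0 \<le> exp \<gamma> - 1\<close> by (intro prod_one_plus_le_exp_sum) simp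
  also have "(\<Sum>x\<in>A. ?p x * (exp \<gamma> - 1)) = (exp \<gamma> - 1) * (\<Sum>x\<in>A. ?p x)"
    by (simp add: sum_distrib_left mult.commute)
  also have "\<dots> \<le> (exp \<gamma> - 1) * (mean_preds c * real (card S))"
    using sum_prob_entry_le[OF assms(1,2)] \<open>0 \<le> exp \<gamma> - 1\<close>
    by (intro mult_left_mono) (simp_all add: A_def)
  also have "\<dots> = mean_preds c * (exp \<gamma> - 1) * real (card S)"
    by simp
  also have "\<dots> \<le> beta c * real (card S)"
    using beta_recursion[of c] by (intro mult_right_mono) (simp_all add: \<gamma>_def)
  finally show ?thesis
    by simp
qed

lemma prob_routing_pattern:
  assumes "A \<subseteq> senders" "T \<subseteq> A" "\<forall>x\<in>A. B x = UNIV"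
  shows "measure_pmf.prob routing (Pi senders (override_on B (\<lambda>x. if x \<in> T then S else - S) A))
    = measure_pmf.prob routing (Pi senders B)
      * ((\<Prod>x\<in>T. measure_pmf.prob (entry x) S) * (\<Prod>x\<in>A - T. 1 - measure_pmf.prob (entry x) S))"
proof -
  have "finite A"
    using assms(1) finite_senders finite_subset by blast
  have compl: "measure_pmf.prob (entry x) (- S) = 1 - measure_pmf.prob (entry x) S" for x
    using measure_pmf.prob_compl[of S "entry x"] by (simp add: Compl_eq_Diff_UNIV)
  have "(\<Prod>x\<in>A. measure_pmf.prob (entry x) (if x \<in> T then S else - S))
      = (\<Prod>x\<in>A - T. measure_pmf.prob (entry x) (if x \<in> T then S else - S))
        * (\<Prod>x\<in>T. measure_pmf.prob (entry x) (if x \<in> T then S else - S))"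
    by (rule prod.subset_diff[OF assms(2) \<open>finite A\<close>])
  also have "\<dots> = (\<Prod>x\<in>A - T. 1 - measure_pmf.prob (entry x) S) * (\<Prod>x\<in>T. measure_pmf.prob (entry x) S)"
    using compl by (intro arg_cong2[where f = "(*)"] prod.cong) auto
  finally show ?thesis
    using prob_routing_override_on[of A B] assms by (simp add: compl mult.commute)
qed

lemma prob_layers_Suc_le_sum:
  assumes "S \<subseteq> senders" "\<forall>y\<in>S. phase y = c"
  defines "A \<equiv> {x \<in> senders. phase x = (c - 1) mod period}"
  shows "measure_pmf.prob routing
           (Pi senders B \<inter> {\<alpha>. t \<le> theta * (\<Sum>i<Suc r. real (card (layer \<alpha> (Suc i) S)))})
    \<le> (\<Sum>T\<in>Pow A. measure_pmf.prob routing (Pi senders (override_on B (\<lambda>x. if x \<in> T then S else - S) A)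
          \<inter> {\<alpha>. t - theta * real (card T) \<le> theta * (\<Sum>i<r. real (card (layer \<alpha> (Suc i) T)))}))"
proof -
  have "Pi senders B \<inter> {\<alpha>. t \<le> theta * (\<Sum>i<Suc r. real (card (layer \<alpha> (Suc i) S)))} \<inter> set_pmf routing
     \<subseteq> (\<Union>T\<in>Pow A. Pi senders (override_on B (\<lambda>x. if x \<in> T then S else - S) A)
          \<inter> {\<alpha>. t - theta * real (card T) \<le> theta * (\<Sum>i<r. real (card (layer \<alpha> (Suc i) T)))})"
    (is "_ \<subseteq> ?U")
  proof
    fix \<alpha>
    assume \<alpha>: "\<alpha> \<in> Pi senders B \<inter> {\<alpha>. t \<le> theta * (\<Sum>i<Suc r. real (card (layer \<alpha> (Suc i) S)))}
      \<inter> set_pmf routing"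
    define T where "T = preds \<alpha> S"
    have "T \<in> Pow A"
      using phase_preds[of \<alpha> S c] \<alpha> assms(1,2) by (auto simp: T_def A_def preds_def)
    moreover have "\<alpha> \<in> Pi senders (override_on B (\<lambda>x. if x \<in> T then S else - S) A)"
      using \<alpha> by (auto simp: T_def preds_def override_on_def A_def)
    moreover have "t \<le> theta * (\<Sum>i<Suc r. real (card (layer \<alpha> (Suc i) S)))"
      using \<alpha> by blast
    then have "t - theta * real (card T) \<le> theta * (\<Sum>i<r. real (card (layer \<alpha> (Suc i) T)))"
      unfolding sum_card_layers_Suc T_def by (simp add: distrib_left)
    ultimately show "\<alpha> \<in> ?U"
      by blast
  qed
  then show ?thesis
    using finite_senders
    by (subst measure_Int_set_pmf[symmetric])
      (auto simp: A_def intro!: order.trans[OF measure_pmf.finite_measure_mono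
         measure_pmf.finite_measure_subadditive_finite])
qed

lemma free_phases_prev_phase:
  assumes "int (Suc r) < period" "free_phases B (c - int (Suc r)) (Suc r)"
  defines "A \<equiv> {x \<in> senders. phase x = (c - 1) mod period}"
  shows "\<forall>x\<in>A. B x = UNIV" "free_phases (override_on B Y A) ((c - 1) mod period - int r) r"
proof -
  show "\<forall>x\<in>A. B x = UNIV"
    using free_phasesD[OF assms(2), of _ r] by (simp add: A_def algebra_simps)
  show "free_phases (override_on B Y A) ((c - 1) mod period - int r) r"
  proof (rule free_phases_override_on)
    show "free_phases B ((c - 1) mod period - int r) r"
      using assms(2) by (rule free_phases_shift[of _ _ _ 0]) (simp_all add: mod_diff_left_eq algebra_simps)
    show "phase x \<noteq> ((c - 1) mod period - int r + int i) mod period" if "x \<in> A" "i < r" for x i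
      using mod_add_neq_self[of "int (r - i)" period "(c - 1) mod period - int r + int i"] that assms(1)
      by (simp add: A_def of_nat_diff)
  qed
qed

text \<open>The first layer above S lies in phase c - 1 and, given the entries of that phase, the
  deeper layers only depend on the entries of the phases c - 2, ..., c - r - 1, which are still
  free; summing over the possible first layers T gives the step of an exponential moment bound.\<close>

lemma prob_layers_tail_Suc:
  assumes IH: "\<And>c S B t. S \<subseteq> senders \<Longrightarrow> \<forall>y\<in>S. phase y = c \<Longrightarrow> free_phases B (c - int r) r \<Longrightarrow>
      measure_pmf.prob routing (Pi senders B \<inter> {\<alpha>. t \<le> theta * (\<Sum>i<r. real (card (layer \<alpha> (Suc i) S)))})
        \<le> measure_pmf.prob routing (Pi senders B) * exp (beta c * real (card S) - t)"
    and "int (Suc r) < period" "S \<subseteq> senders" "\<forall>y\<in>S. phase y = c"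
    and "free_phases B (c - int (Suc r)) (Suc r)"
  shows "measure_pmf.prob routing (Pi senders B \<inter> {\<alpha>. t \<le> theta * (\<Sum>i<Suc r. real (card (layer \<alpha> (Suc i) S)))})
           \<le> measure_pmf.prob routing (Pi senders B) * exp (beta c * real (card S) - t)"
proof -
  define A where "A = {x \<in> senders. phase x = (c - 1) mod period}"
  define BT where "BT T = override_on B (\<lambda>x. if x \<in> T then S else - S) A" for T
  define p where "p x = measure_pmf.prob (entry x) S" for x
  define \<gamma> where "\<gamma> = theta + beta ((c - 1) mod period)"
  define E where "E T = Pi senders (BT T)
    \<inter> {\<alpha>. t - theta * real (card T) \<le> theta * (\<Sum>i<r. real (card (layer \<alpha> (Suc i) T)))}" for T
  let ?P = "measure_pmf.prob routing (Pi senders B)"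
  have "A \<subseteq> senders"
    by (auto simp: A_def)
  note free = free_phases_prev_phase[OF assms(2,5)]
  have prob_E: "measure_pmf.prob routing (E T)
      \<le> ?P * exp (- t) * ((\<Prod>x\<in>T. p x * exp \<gamma>) * (\<Prod>x\<in>A - T. 1 - p x))" if T: "T \<in> Pow A" for T
  proof -
    have "measure_pmf.prob routing (E T) \<le> measure_pmf.prob routing (Pi senders (BT T))
        * exp (beta ((c - 1) mod period) * real (card T) - (t - theta * real (card T)))"
      unfolding E_def BT_def
      using IH[where c = "(c - 1) mod period" and S = T and t = "t - theta * real (card T)"] T free(2)
      by (auto simp: A_def)
    also have "exp (beta ((c - 1) mod period) * real (card T) - (t - theta * real (card T)))
        = exp (- t) * (\<Prod>x\<in>T. exp \<gamma>)"
      by (simp add: \<gamma>_def exp_of_nat_mult[symmetric] mult_exp_exp algebra_simps)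
    also have "measure_pmf.prob routing (Pi senders (BT T)) = ?P * ((\<Prod>x\<in>T. p x) * (\<Prod>x\<in>A - T. 1 - p x))"
      using prob_routing_pattern \<open>A \<subseteq> senders\<close> free(1) T by (simp add: A_def BT_def p_def)
    finally show ?thesis
      by (simp add: prod.distrib mult_ac)
  qed
  have "measure_pmf.prob routing
          (Pi senders B \<inter> {\<alpha>. t \<le> theta * (\<Sum>i<Suc r. real (card (layer \<alpha> (Suc i) S)))})
      \<le> (\<Sum>T\<in>Pow A. measure_pmf.prob routing (E T))"
    using prob_layers_Suc_le_sum[OF assms(3,4), of B t r] by (simp add: A_def BT_def E_def)
  also have "\<dots> \<le> ?P * exp (- t) * (\<Sum>T\<in>Pow A. (\<Prod>x\<in>T. p x * exp \<gamma>) * (\<Prod>x\<in>A - T. 1 - p x))"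
    unfolding sum_distrib_left by (intro sum_mono prob_E)
  also have "\<dots> \<le> ?P * exp (- t) * exp (beta c * real (card S))"
    using sum_Pow_prod_le_exp_beta[OF assms(3,4)]
    by (intro mult_left_mono) (simp_all add: A_def \<gamma>_def p_def)
  also have "\<dots> = ?P * exp (beta c * real (card S) - t)"
    by (simp add: mult_exp_exp mult.assoc)
  finally show ?thesis .
qed

lemma prob_layers_tail:
  assumes "int r < period" "S \<subseteq> senders" "\<forall>y\<in>S. phase y = c" "free_phases B (c - int r) r"
  shows "measure_pmf.prob routing (Pi senders B \<inter> {\<alpha>. t \<le> theta * (\<Sum>i<r. real (card (layer \<alpha> (Suc i) S)))})
           \<le> measure_pmf.prob routing (Pi senders B) * exp (beta c * real (card S) - t)"
  using assms
proof (induction r arbitrary: c S B t)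
  case 0
  let ?P = "measure_pmf.prob routing (Pi senders B)"
  show ?case
  proof (cases "t \<le> 0")
    case True
    then have "?P \<le> ?P * exp (beta c * real (card S) - t)"
      by (simp add: beta_def mult_le_cancel_left1)
    moreover have "measure_pmf.prob routing (Pi senders B \<inter> {\<alpha>. t \<le> 0}) \<le> ?P"
      by (intro measure_pmf.finite_measure_mono) auto
    ultimately show ?thesis
      by simp
  qed simp
next
  case (Suc r)
  then show ?case
    by (intro prob_layers_tail_Suc) auto
qed

lemma funpow_routing_d: "\<alpha> \<in> set_pmf routing \<Longrightarrow> (\<alpha> ^^ n) d = d"
  by (induction n) (simp_all add: set_routing_outside senders_def)

lemma detour_from_W:
  assumes "\<alpha> \<in> set_pmf routing" "x \<in> W - {d}" "\<forall>i\<le>2 * m. (\<alpha> ^^ i) x \<noteq> d"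
  shows "detour \<alpha> m x"
  using assms(2,3)
proof (induction m arbitrary: x)
  case (Suc m)
  have "\<alpha> x \<in> V"
    using routing_step_W assms(1) Suc.prems(1) by blast
  moreover have "\<alpha> (\<alpha> x) \<noteq> d"
    using Suc.prems(2) by (auto dest!: spec[of _ 2] simp: numeral_2_eq_2)
  ultimately have "\<alpha> x \<in> cut_off"
    using routing_step_V assms(1) by blast
  moreover have "\<forall>i\<le>2 * m. (\<alpha> ^^ i) (\<alpha> (\<alpha> x)) \<noteq> d"
  proof (intro allI impI)
    fix i assume "i \<le> 2 * m"
    then have "Suc (Suc i) \<le> 2 * Suc m"
      by simp
    then have "(\<alpha> ^^ Suc (Suc i)) x \<noteq> d"
      using Suc.prems(2) by blast
    then show "(\<alpha> ^^ i) (\<alpha> (\<alpha> x)) \<noteq> d"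
      by (simp add: funpow_swap1)
  qed
  ultimately show ?case
    using Suc.IH routing_step_cut_off assms(1) by simp
qed simp

lemma detour_of_long_walk:
  assumes "\<alpha> \<in> set_pmf routing" "s \<in> senders" "\<forall>i\<le>2 * K - 1. (\<alpha> ^^ i) s \<noteq> d"
  shows "\<exists>w\<in>W - {d}. detour \<alpha> (K - 1) w"
proof (cases "s \<in> W")
  case True
  then show ?thesis
    using detour_from_W[OF assms(1), of s "K - 1"] assms(2,3) by (auto simp: senders_def)
next
  case False
  then have "s \<in> V"
    using assms(2) by (simp add: senders_def)
  moreover have "\<alpha> s \<noteq> d"
    using assms(3) K_pos by (auto dest!: spec[of _ 1])
  ultimately have "\<alpha> s \<in> W - {d}"
    using routing_step_V routing_step_cut_off assms(1) by blast
  moreover have "\<forall>i\<le>2 * (K - 1). (\<alpha> ^^ i) (\<alpha> s) \<noteq> d"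
  proof (intro allI impI)
    fix i assume "i \<le> 2 * (K - 1)"
    then have "Suc i \<le> 2 * K - 1"
      using K_pos by simp
    then have "(\<alpha> ^^ Suc i) s \<noteq> d"
      using assms(3) by blast
    then show "(\<alpha> ^^ i) (\<alpha> s) \<noteq> d"
      by (simp add: funpow_swap1)
  qed
  ultimately show ?thesis
    using detour_from_W[OF assms(1)] by blast
qed

context
  fixes \<alpha>
  assumes \<alpha>: "\<alpha> \<in> set_pmf routing"
    and no_detour: "\<not> (\<exists>w\<in>W - {d}. detour \<alpha> (K - 1) w)"
begin

lemma reaches_d: "s \<in> senders \<Longrightarrow> \<exists>i\<le>2 * K - 1. (\<alpha> ^^ i) s = d"
  using detour_of_long_walk[OF \<alpha>] no_detour by blast

lemma no_cycle:
  assumes "u \<in> senders" "0 < k"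
  shows "(\<alpha> ^^ k) u \<noteq> u"
proof
  assume cycle: "(\<alpha> ^^ k) u = u"
  have periodic: "(\<alpha> ^^ (k * m)) u = u" for m
    by (induction m) (simp_all add: funpow_add cycle)
  obtain i where "(\<alpha> ^^ i) u = d"
    using reaches_d assms(1) by blast
  then have "(\<alpha> ^^ (k * i - i + i)) u = d"
    by (simp add: funpow_add funpow_routing_d[OF \<alpha>])
  moreover have "k * i - i + i = k * i"
    using assms(2) by (simp add: le_diff_iff')
  ultimately show False
    using periodic[of i] assms(1) by (simp add: senders_def)
qed

lemma flow_visits_early:
  assumes "u \<in> senders" "flow_visits \<alpha> d s u" "s \<in> senders"
  obtains k where "k < 2 * K - 1" "(\<alpha> ^^ k) s = u" "\<forall>j<k. (\<alpha> ^^ j) s \<noteq> d"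
proof -
  obtain k where k: "(\<alpha> ^^ k) s = u" "\<forall>j<k. (\<alpha> ^^ j) s \<noteq> d"
    using assms(2) by (auto simp: flow_visits_def)
  have "\<forall>j\<le>k. (\<alpha> ^^ j) s \<noteq> d"
    using k assms(1) by (metis le_neq_implies_less senders_def Diff_iff insertI1)
  have "k < 2 * K - 1"
  proof (rule ccontr)
    assume "\<not> k < 2 * K - 1"
    then have "\<forall>i\<le>2 * K - 1. (\<alpha> ^^ i) s \<noteq> d"
      using \<open>\<forall>j\<le>k. (\<alpha> ^^ j) s \<noteq> d\<close> by auto
    then show False
      using reaches_d[OF assms(3)] by blast
  qed
  then show ?thesis
    using k that by blast
qed

lemma mem_layer:
  assumes "u \<in> senders"
  shows "s \<in> senders \<Longrightarrow> \<forall>j<k. (\<alpha> ^^ j) s \<noteq> d \<Longrightarrow> (\<alpha> ^^ k) s = u \<Longrightarrow> s \<in> layer \<alpha> k {u}"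
proof (induction k arbitrary: s)
  case (Suc k)
  have "\<alpha> s \<in> senders"
  proof (cases k)
    case 0
    then show ?thesis
      using Suc.prems(3) assms by simp
  next
    case (Suc k')
    then have "\<alpha> s \<noteq> d"
      using Suc.prems(2) by (auto dest!: spec[of _ 1])
    then show ?thesis
      using routing_step(1)[OF \<alpha> Suc.prems(1)] by blast
  qed
  moreover have "\<forall>j<k. (\<alpha> ^^ j) (\<alpha> s) \<noteq> d" "(\<alpha> ^^ k) (\<alpha> s) = u"
    using Suc.prems(2,3) by (auto simp: funpow_swap1)
  ultimately have "\<alpha> s \<in> layer \<alpha> k {u}"
    using Suc.IH by blast
  then show ?case
    using Suc.prems(1) by (simp add: layer_def preds_def)
qed (simp add: layer_def)

lemma finite_layer: "finite (layer \<alpha> k {u})"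
proof (cases k)
  case (Suc k')
  then have "layer \<alpha> k {u} \<subseteq> senders"
    by (auto simp: layer_def preds_def)
  then show ?thesis
    using finite_senders finite_subset by blast
qed simp

lemma load_eq_card_flows:
  "u \<in> senders \<Longrightarrow> load (V \<union> W) d \<alpha> u = enat (card {s \<in> V \<union> W - {d}. flow_visits \<alpha> d s u})"
  using no_cycle by (auto simp: load_def)

lemma card_flows_le_layers:
  assumes "u \<in> senders"
  shows "real (card {s \<in> V \<union> W - {d}. flow_visits \<alpha> d s u})
           \<le> 1 + (\<Sum>i<2 * K - 2. real (card (layer \<alpha> (Suc i) {u})))"
proof -
  have "{s \<in> V \<union> W - {d}. flow_visits \<alpha> d s u} \<subseteq> (\<Union>k<2 * K - 1. layer \<alpha> k {u})"
  proof
    fix s assume "s \<in> {s \<in> V \<union> W - {d}. flow_visits \<alpha> d s u}"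
    then have s: "s \<in> senders" "flow_visits \<alpha> d s u"
      by (auto simp: senders_def)
    then obtain k where "k < 2 * K - 1" "(\<alpha> ^^ k) s = u" "\<forall>j<k. (\<alpha> ^^ j) s \<noteq> d"
      using flow_visits_early assms by blast
    then show "s \<in> (\<Union>k<2 * K - 1. layer \<alpha> k {u})"
      using mem_layer[OF assms s(1)] by blast
  qed
  then have "card {s \<in> V \<union> W - {d}. flow_visits \<alpha> d s u} \<le> (\<Sum>k<2 * K - 1. card (layer \<alpha> k {u}))"
    using finite_layer by (intro order.trans[OF card_mono card_UN_le]) auto
  also have "\<dots> = 1 + (\<Sum>i<2 * K - 2. card (layer \<alpha> (Suc i) {u}))"
  proof -
    have "2 * K - 1 = Suc (2 * K - 2)"
      using K_pos by simp
    then show ?thesis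
      by (simp only: sum.lessThan_Suc_shift layer_0) simp
  qed
  finally show ?thesis
    by (simp flip: of_nat_sum)
qed

lemma load_le_if_few_preds:
  assumes "u \<in> senders" "(\<Sum>i<2 * K - 2. real (card (layer \<alpha> (Suc i) {u}))) < L - 1"
  shows "\<exists>m. load (V \<union> W) d \<alpha> u = enat m \<and> real m \<le> L"
  using load_eq_card_flows[OF assms(1)] card_flows_le_layers[OF assms(1)] assms(2) by force

end

lemma prob_long_detour_le:
  "measure_pmf.prob routing {\<alpha>. \<exists>w\<in>W - {d}. detour \<alpha> (K - 1) w} \<le> real (card (W - {d})) / 2 ^ (K - 1)"
proof -
  have "measure_pmf.prob routing {\<alpha>. \<exists>w\<in>W - {d}. detour \<alpha> (K - 1) w}
      \<le> (\<Sum>w\<in>W - {d}. measure_pmf.prob routing {\<alpha>. detour \<alpha> (K - 1) w})"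
    using finite_W measure_pmf.finite_measure_subadditive_finite[of "W - {d}" "\<lambda>w. {\<alpha>. detour \<alpha> (K - 1) w}"]
    by (simp add: Collect_bex_eq)
  also have "\<dots> \<le> (\<Sum>w\<in>W - {d}. 1 / 2 ^ (K - 1))"
  proof (intro sum_mono)
    fix w assume "w \<in> W - {d}"
    then show "measure_pmf.prob routing {\<alpha>. detour \<alpha> (K - 1) w} \<le> 1 / 2 ^ (K - 1)"
      using prob_detour_le[of "K - 1" w "\<lambda>_. UNIV"] by simp
  qed
  finally show ?thesis
    by simp
qed

lemma prob_many_preds_le:
  assumes "u \<in> senders"
  shows "measure_pmf.prob routing {\<alpha>. L - 1 \<le> (\<Sum>i<2 * K - 2. real (card (layer \<alpha> (Suc i) {u})))}
           \<le> exp (1 / 80 - theta * (L - 1))"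
proof -
  have "measure_pmf.prob routing (Pi senders (\<lambda>_. UNIV)
          \<inter> {\<alpha>. theta * (L - 1) \<le> theta * (\<Sum>i<2 * K - 2. real (card (layer \<alpha> (Suc i) {u})))})
      \<le> measure_pmf.prob routing (Pi senders (\<lambda>_. UNIV)) * exp (beta (phase u) * real (card {u}) - theta * (L - 1))"
    using assms K_pos by (intro prob_layers_tail) (auto simp: of_nat_diff)
  moreover have "0 < theta"
    by (simp add: theta_def)
  then have "{\<alpha>. theta * (L - 1) \<le> theta * (\<Sum>i<2 * K - 2. real (card (layer \<alpha> (Suc i) {u})))}
      = {\<alpha>. L - 1 \<le> (\<Sum>i<2 * K - 2. real (card (layer \<alpha> (Suc i) {u})))}"
    by (simp add: mult_le_cancel_left_pos)
  ultimately have "measure_pmf.prob routing {\<alpha>. L - 1 \<le> (\<Sum>i<2 * K - 2. real (card (layer \<alpha> (Suc i) {u})))}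
      \<le> exp (beta (phase u) - theta * (L - 1))"
    by simp
  also have "\<dots> \<le> exp (1 / 80 - theta * (L - 1))"
    by (simp add: beta_def)
  finally show ?thesis .
qed

lemma prob_loads_bounded:
  "1 - (real (card (W - {d})) / 2 ^ (K - 1) + real (card senders) * exp (1 / 80 - theta * (L - 1)))
     \<le> measure_pmf.prob routing {\<alpha>. \<forall>u \<in> V \<union> W - {d}. \<exists>m. load (V \<union> W) d \<alpha> u = enat m \<and> real m \<le> L}"
  (is "_ \<le> measure_pmf.prob routing ?good")
proof -
  define many_preds where
    "many_preds u = {\<alpha>. L - 1 \<le> (\<Sum>i<2 * K - 2. real (card (layer \<alpha> (Suc i) {u})))}" for u
  have "- ?good \<inter> set_pmf routing
      \<subseteq> {\<alpha>. \<exists>w\<in>W - {d}. detour \<alpha> (K - 1) w} \<union> (\<Union>u\<in>senders. many_preds u)"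
    using load_le_if_few_preds by (force simp: many_preds_def senders_def not_le)
  then have "measure_pmf.prob routing (- ?good)
      \<le> measure_pmf.prob routing ({\<alpha>. \<exists>w\<in>W - {d}. detour \<alpha> (K - 1) w} \<union> (\<Union>u\<in>senders. many_preds u))"
    by (subst measure_Int_set_pmf[symmetric]) (intro measure_pmf.finite_measure_mono, auto)
  also have "\<dots> \<le> measure_pmf.prob routing {\<alpha>. \<exists>w\<in>W - {d}. detour \<alpha> (K - 1) w}
        + (\<Sum>u\<in>senders. measure_pmf.prob routing (many_preds u))"
    using finite_senders
    by (intro order.trans[OF measure_Un_le] add_left_mono measure_pmf.finite_measure_subadditive_finite) auto
  also have "\<dots> \<le> real (card (W - {d})) / 2 ^ (K - 1) + (\<Sum>u\<in>senders. exp (1 / 80 - theta * (L - 1)))"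
    using prob_long_detour_le prob_many_preds_le by (intro add_mono sum_mono) (auto simp: many_preds_def)
  finally show ?thesis
    using measure_pmf.prob_compl[of ?good routing] by (simp add: Compl_eq_Diff_UNIV)
qed

end

lemma two_power_eq_powr:
  assumes "0 < n" "real K = C * log 2 (real n)"
  shows "(2::real) ^ K = real n powr C"
proof -
  have "(2::real) ^ K = (2 powr log 2 (real n)) powr C"
    using assms(2) by (simp add: powr_realpow[symmetric] powr_powr mult.commute)
  also have "\<dots> = real n powr C"
    using assms(1) by simp
  finally show ?thesis .
qed

lemma pos_if_real_eq_mult_log2:
  fixes K n :: nat
  assumes "0 < C" "1 < n" "real K = C * log 2 (real n)"
  shows "0 < K"
proof -
  have "0 < log 2 (real n)"
    using assms(2) by simp
  then have "0 < real K"
    using assms(1,3) by simp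
  then show ?thesis
    by simp
qed

lemma ln_le_log2_mult_log2_log2:
  assumes "4 \<le> n"
  shows "ln (real n) \<le> log 2 (real n) * log 2 (log 2 (real n))"
proof -
  have "2 \<le> log 2 (real n)"
    using assms by (simp add: le_log_iff powr_numeral)
  then have "1 \<le> log 2 (log 2 (real n))"
    by (simp add: le_log_iff)
  have "ln (real n) \<le> log 2 (real n)"
    using assms ln_2_less_1 by (simp add: log_def divide_le_eq_1 le_divide_eq)
  also have "\<dots> \<le> log 2 (real n) * log 2 (log 2 (real n))"
    using \<open>1 \<le> log 2 (log 2 (real n))\<close> \<open>2 \<le> log 2 (real n)\<close> by simp
  finally show ?thesis .
qed

lemma exp_le_powr_neg:
  assumes "4 \<le> n" "1000 * (C + 1) * ln (real n) \<le> L"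
  shows "exp (1 / 80 - (L - 1) / 1000) \<le> 1 / (2 * real n powr C)"
proof -
  define N where "N = real n powr C"
  have "0 < N"
    using assms(1) by (simp add: N_def)
  have "(C + 1) * ln (real n) \<le> L / 1000"
    using assms(2) by (simp add: algebra_simps)
  then have "1 / 80 - (L - 1) / 1000 \<le> 27 / 2000 - (C + 1) * ln (real n)"
    by (simp add: field_simps)
  then have "exp (1 / 80 - (L - 1) / 1000) \<le> exp (27 / 2000 - (C + 1) * ln (real n))"
    by simp
  also have "\<dots> = exp (27 / 2000) / (real n * N)"
    using assms(1) by (simp add: exp_diff N_def powr_def algebra_simps exp_add)
  also have "\<dots> \<le> 2 / (real n * N)"
  proof -
    have "exp (27 / 2000 :: real) \<le> 1 + 27 / 2000 + (27 / 2000) ^ 2"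
      by (rule exp_bound) auto
    then show ?thesis
      using \<open>0 < N\<close> assms(1) by (intro divide_right_mono) (auto simp: power2_eq_square)
  qed
  also have "\<dots> \<le> 1 / (2 * N)"
    using \<open>0 < N\<close> assms(1) by (simp add: field_simps)
  finally show ?thesis
    by (simp add: N_def)
qed

lemma failure_probability_le:
  fixes C L :: real and n K :: nat
  assumes "0 < C" "4 \<le> n" "real K = C * log 2 (real n)" "1000 * (C + 1) * ln (real n) \<le> L"
  shows "real n / 2 ^ (K - 1) + 2 * real n * exp (1 / 80 - (L - 1) / 1000) \<le> 3 * real n powr (- (C - 1))"
proof -
  define N where "N = real n powr C"
  have "0 < N"
    using assms(2) by (simp add: N_def)
  have "0 < K"
    by (rule pos_if_real_eq_mult_log2[of C n]) (use assms in auto)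
  then have "(2::real) ^ K = 2 * 2 ^ (K - 1)"
    by (simp flip: power_Suc)
  then have two_power: "(2::real) ^ (K - 1) = N / 2"
    using two_power_eq_powr[OF _ assms(3)] assms(2) by (simp add: N_def)
  have "real n / 2 ^ (K - 1) = 2 * (real n / N)"
    unfolding two_power by simp
  moreover have "2 * real n * exp (1 / 80 - (L - 1) / 1000) \<le> 2 * real n * (1 / (2 * N))"
    using exp_le_powr_neg[OF assms(2,4)] by (intro mult_left_mono) (simp_all add: N_def)
  moreover have "2 * real n * (1 / (2 * N)) = real n / N"
    by simp
  moreover have "real n powr (- (C - 1)) = real n / N"
    using assms(2) by (simp add: N_def powr_diff)
  ultimately show ?thesis
    by linarith
qed

lemma (in protocol_PB) prob_loads_le_log_loglog:
  assumes "card V = n" "card W = n" "4 \<le> n" "0 < C" "real K = C * log 2 (real n)"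
  shows "1 - 3 * real n powr (- (C - 1))
    \<le> measure_pmf.prob routing {\<alpha>. \<forall>u \<in> V \<union> W - {d}. \<exists>m. load (V \<union> W) d \<alpha> u = enat m
          \<and> real m \<le> 1000 * (C + 1) * log 2 (real n) * log 2 (log 2 (real n))}"
proof -
  define L where "L = 1000 * (C + 1) * log 2 (real n) * log 2 (log 2 (real n))"
  have "1000 * (C + 1) * ln (real n) \<le> L"
    using ln_le_log2_mult_log2_log2[OF assms(3)] assms(4) by (simp add: L_def mult.assoc)
  have "card (W - {d}) \<le> n"
    using assms(2) finite_W by (metis card_Diff1_le)
  moreover have "card senders \<le> 2 * n"
    using card_Un_le[of V W] card_Diff1_le[of "V \<union> W" d] assms(1,2) by (simp add: senders_def)
  ultimately have "real (card (W - {d})) / 2 ^ (K - 1) + real (card senders) * exp (1 / 80 - theta * (L - 1))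
      \<le> real n / 2 ^ (K - 1) + 2 * real n * exp (1 / 80 - (L - 1) / 1000)"
    by (intro add_mono divide_right_mono mult_right_mono) (auto simp: theta_def)
  also have "\<dots> \<le> 3 * real n powr (- (C - 1))"
    using failure_probability_le assms(3-5) \<open>1000 * (C + 1) * ln (real n) \<le> L\<close> by blast
  finally show ?thesis
    using prob_loads_bounded[of L] by (simp add: L_def)
qed

theorem mainTheorem2:
  fixes C :: real
  assumes "C > 4"
  shows "\<exists>c::real. \<exists>N::nat. \<forall>n\<ge>N. \<forall>(V::nat set) (W::nat set) (lvl::nat \<Rightarrow> nat) (K::nat) (I::nat)
           (d::nat) (F::(nat \<times> nat) set).
      finite V \<and> finite W \<and> V \<inter> W = {} \<and> card V = n \<and> card W = n
      \<and> real K = C * log 2 (real n) \<and> K dvd n \<and> I = n div K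
      \<and> (\<forall>u \<in> V \<union> W. lvl u < K)
      \<and> (\<forall>i<K. card {v \<in> V. lvl v = i} = I \<and> card {w \<in> W. lvl w = i} = I)
      \<and> d \<in> W
      \<and> F \<subseteq> (V \<times> W) \<union> (W \<times> V) \<and> sym F
      \<and> (\<forall>i<K. (\<forall>w \<in> W. real (card {v \<in> V. lvl v = i \<and> w \<in> failed_nbrs F v}) \<le> real I / 3)
              \<and> (\<forall>v \<in> V. real (card {w \<in> W. lvl w = i \<and> v \<in> failed_nbrs F w}) \<le> real I / 3))
      \<longrightarrow> measure_pmf.prob (PB_routing V W lvl K F d)
            {\<alpha>. \<forall>u \<in> (V \<union> W) - {d}. \<exists>m. load (V \<union> W) d \<alpha> u = enat m
                   \<and> real m \<le> c * log 2 (real n) * log 2 (log 2 (real n))}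
          \<ge> 1 - 3 * real n powr (-(C - 1))"
proof (intro exI[of _ "1000 * (C + 1)"] exI[of _ 4] allI impI, elim conjE, goal_cases)
  case (1 n V W lvl K I d F)
  have "0 < K"
    by (rule pos_if_real_eq_mult_log2[of C n]) (use 1 assms in auto)
  moreover have "0 < I"
    using 1 by (cases I) auto
  \<comment> \<open>F need not consist of edges of the graph: only failures between V and W are ever consulted.\<close>
  ultimately interpret protocol_PB V W lvl K I d F
    using 1 by unfold_locales
  show ?case
    using prob_loads_le_log_loglog 1 assms by simp
qed

end
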